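(* Let $q$ be an odd prime power, $p$ its characteristic, $d\ge2$ an integer and $t\in\mathbb{F}_q^{\times}$. Let $\omega$ be a generator of the group of multiplicative characters of $\mathbb{F}_q^{\times}$, $\phi$ the unique character of order $2$, $\zeta_p$ a primitive $p$-th root of unity, and for a character $\chi$ let $g_q(\chi)=\sum_{x\in\mathbb{F}_q^{\times}}\chi(x)\zeta_p^{\mathrm{tr}(x)}$, where $\mathrm{tr}:\mathbb{F}_q\to\mathbb{F}_p$ is the trace. Define $$H_q(t)=\frac{(-1)^d}{1-q}\sum_{m=0}^{q-2}\left(\frac{g_q(\phi\omega^m)\,g_q(\omega^{-m})}{g_q(\phi)}\right)^d\omega\big((-1)^dt\big)^m.$$ Then the number of points $(x_1,\dots,x_d)\in(\mathbb{F}_q^{\times})^d$ on the hypersurface $$X_t:\ \prod_{i=1}^d\left(x_i+2+x_i^{-1}\right)=4^d t^{-1}$$ equals $$\frac{(q-2)^d-(-1)^d}{q-1}-(-1)^dH_q(t).$$ *)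

theory Defs
  imports Complex_Main "HOL-Library.Cardinality"
begin

text \<open>Multiplicative characters of the unit group of a finite field 'a, viewed as
  functions 'a to complex (values at 0 are irrelevant and never used).\<close>
definition mult_char :: "('a::{finite,field} \<Rightarrow> complex) \<Rightarrow> bool" where
  "mult_char \<chi> \<longleftrightarrow> \<chi> 1 = 1 \<and> (\<forall>x y. x \<noteq> 0 \<longrightarrow> y \<noteq> 0 \<longrightarrow> \<chi> (x * y) = \<chi> x * \<chi> y)"

definition char_generator :: "('a::{finite,field} \<Rightarrow> complex) \<Rightarrow> bool" where
  "char_generator \<omega> \<longleftrightarrow> mult_char \<omega> \<and>
     (\<forall>\<chi>. mult_char \<chi> \<longrightarrow> (\<exists>m::nat. \<forall>x. x \<noteq> (0::'a) \<longrightarrow> \<chi> x = \<omega> x ^ m))"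

definition quad_char :: "('a::{finite,field} \<Rightarrow> complex) \<Rightarrow> bool" where
  "quad_char \<phi> \<longleftrightarrow> mult_char \<phi> \<and> (\<exists>x. x \<noteq> (0::'a) \<and> \<phi> x \<noteq> 1) \<and>
     (\<forall>x. x \<noteq> (0::'a) \<longrightarrow> \<phi> x ^ 2 = 1)"

definition field_degree :: "'a::{finite,field} itself \<Rightarrow> nat" where
  "field_degree (x::'a itself) = (THE n. CARD('a) = CHAR('a) ^ n)"

text \<open>Absolute trace F_q to F_p (its values lie in the prime subfield of 'a).\<close>
definition ftrace :: "'a::{finite,field} \<Rightarrow> 'a" where
  "ftrace x = (\<Sum>i<field_degree TYPE('a). x ^ (CHAR('a) ^ i))"

text \<open>zeta_p ^ tr(x): the exponent is the residue k < p with of_nat k = tr x.\<close>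
definition addchar :: "complex \<Rightarrow> 'a::{finite,field} \<Rightarrow> complex" where
  "addchar \<zeta> x = \<zeta> ^ (THE k. k < CHAR('a) \<and> of_nat k = ftrace x)"

definition gauss_sum :: "complex \<Rightarrow> ('a::{finite,field} \<Rightarrow> complex) \<Rightarrow> complex" where
  "gauss_sum \<zeta> \<chi> = (\<Sum>x\<in>UNIV - {0::'a}. \<chi> x * addchar \<zeta> x)"

definition H_q :: "complex \<Rightarrow> ('a::{finite,field} \<Rightarrow> complex) \<Rightarrow> ('a \<Rightarrow> complex) \<Rightarrow> nat \<Rightarrow> 'a \<Rightarrow> complex" where
  "H_q \<zeta> \<omega> \<phi> d t =
     (-1) ^ d / (1 - of_nat CARD('a)) *
     (\<Sum>m<CARD('a) - 1.
        (gauss_sum \<zeta> (\<lambda>x. \<phi> x * \<omega> x ^ m) * gauss_sum \<zeta> (\<lambda>x. inverse (\<omega> x) ^ m)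
           / gauss_sum \<zeta> \<phi>) ^ d
        * \<omega> ((-1) ^ d * t) ^ m)"

end

theory Submission
  imports Defs "HOL-Algebra.Algebraic_Closure_Type" "HOL-Library.Real_Mod" "HOL-Number_Theory.Residues"
begin

text \<open>
  Write \<open>f(x) = x + 2 + x\<^sup>-\<^sup>1\<close>, \<open>q = CARD('a)\<close> and let \<open>\<omega>\<close> be extended by \<open>\<omega>(0) = 0\<close>.
  Orthogonality of the characters \<open>\<omega>\<^sup>m\<close> expresses the number of tuples with
  \<open>\<Prod> f(x\<^sub>i) = c\<close> as \<open>(q - 1)\<^sup>-\<^sup>1 \<Sum>\<^sub>m \<omega>(c)\<^sup>-\<^sup>m T\<^sub>m\<^sup>d\<close> with \<open>T\<^sub>m = \<Sum>\<^sub>x \<omega>\<^sup>m(f(x))\<close>.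
  Since \<open>f(x) = y\<close> is a quadratic equation in \<open>x\<close> with discriminant \<open>y (y - 4)\<close>,
  \<open>T\<^sub>m = [q - 1 | m] (q - 1) + \<Sum>\<^sub>y \<omega>\<^sup>m(y) \<phi>(y (y - 4))\<close>, and the substitution
  \<open>y = 4 + 4 / (a - 1)\<close> turns the last sum into \<open>\<omega>\<^sup>m(-4) J(\<phi>\<omega>\<^sup>m, \<omega>\<^sup>-\<^sup>m)\<close>.
  As \<open>\<phi>\<omega>\<^sup>m \<omega>\<^sup>-\<^sup>m = \<phi>\<close> is nontrivial, this Jacobi sum equals
  \<open>g(\<phi>\<omega>\<^sup>m) g(\<omega>\<^sup>-\<^sup>m) / g(\<phi>)\<close>, which gives \<open>H\<^sub>q(t)\<close>; the terms \<open>m = 0\<close> and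
  \<open>m = q - 1\<close>, where \<open>J = -1\<close>, produce the main term \<open>((q - 2)\<^sup>d - (-1)\<^sup>d) / (q - 1)\<close>.
\<close>

section \<open>Finite fields\<close>

lemma prime_CHAR_finite_field: "prime CHAR('a::{finite,field})"
  using prime_CHAR_semidom finite_imp_CHAR_pos[OF finite_class.finite_UNIV] by blast

lemma two_le_card_finite_field: "2 \<le> CARD('a::{finite,field})"
  using card_mono[of "UNIV :: 'a set" "{0, 1}"] by simp

lemma two_neq_zero_if_odd_CARD:
  assumes "odd CARD('a::{finite,field})"
  shows "(2::'a) \<noteq> 0"
proof
  assume "(2::'a) = 0"
  then have "CHAR('a) dvd 2"
    by (metis of_nat_eq_0_iff_char_dvd of_nat_numeral)
  then have "CHAR('a) = 2"
    using primes_dvd_imp_eq[OF prime_CHAR_finite_field[where 'a='a] two_is_prime_nat] by simp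
  then show False
    using assms CHAR_dvd_CARD[where 'a='a] by simp
qed

lemma power_eq_if_cong:
  fixes x :: "'a::monoid_mult"
  assumes "x ^ n = 1" "[a = b] (mod n)"
  shows "x ^ a = x ^ b"
proof -
  have "x ^ k = x ^ (k mod n)" for k
    by (metis assms(1) mult_div_mod_eq power_add power_mult power_one mult_1)
  then show ?thesis
    using assms(2) unfolding cong_def by metis
qed

lemma power_eq_power_iff_cong:
  fixes x :: "'a::idom"
  assumes order: "\<And>k. x ^ k = 1 \<longleftrightarrow> n dvd k" and "n > 0"
  shows "x ^ a = x ^ b \<longleftrightarrow> [a = b] (mod n)"
proof
  show "[a = b] (mod n) \<Longrightarrow> x ^ a = x ^ b"
    using order by (intro power_eq_if_cong) auto
next
  have "x \<noteq> 0"
    using order[of n] \<open>n > 0\<close> by (auto simp: power_0_left)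
  have "[a = b] (mod n)" if "x ^ a = x ^ b" "a \<le> b" for a b
  proof -
    have "x ^ a * x ^ (b - a) = x ^ b"
      using that(2) by (simp flip: power_add)
    then have "x ^ a * x ^ (b - a) = x ^ a * 1"
      using that(1) by simp
    then have "n dvd b - a"
      using \<open>x \<noteq> 0\<close> order by simp
    then show ?thesis
      using that(2) cong_altdef_nat[of a b n] by (simp add: cong_sym_eq)
  qed
  then show "x ^ a = x ^ b \<Longrightarrow> [a = b] (mod n)"
    by (metis cong_sym nat_le_linear)
qed

lemma finite_field_cyclic:
  obtains g :: "'a::{finite,field}"
  where "g \<noteq> 0" and "\<And>x. x \<noteq> 0 \<Longrightarrow> \<exists>i. x = g ^ i"
    and "\<And>n. g ^ n = 1 \<longleftrightarrow> CARD('a) - 1 dvd n"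
proof -
  let ?R = "ring_of_type_algebra :: 'a ring"
  let ?G = "Multiplicative_Group.mult_of ?R"
  have group: "group ?G"
    using field.field_mult_group[OF field_from_type_algebra] .
  have carrier: "carrier ?G = UNIV - {0}"
    by (simp add: ring_of_type_algebra_def)
  have pow: "x [^]\<^bsub>?G\<^esub> n = x ^ n" "x [^]\<^bsub>?R\<^esub> n = x ^ n" for x :: 'a and n :: nat
    by (induction n) (simp_all add: ring_of_type_algebra_def)
  have "\<exists>g \<in> carrier ?G. carrier ?G = {g [^]\<^bsub>?R\<^esub> i | i::nat. i \<in> UNIV}"
    by (rule field.finite_field_mult_group_has_gen[OF field_from_type_algebra])
       (simp add: ring_of_type_algebra_def)
  then obtain g where g: "g \<in> carrier ?G"
    and gen: "carrier ?G = {g [^]\<^bsub>?G\<^esub> i | i::nat. i \<in> UNIV}"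
    by (auto simp only: pow)
  have "group.ord ?G g = card (carrier ?G)"
    using group.generate_pow_card[OF group g] group.generate_pow_on_finite_carrier[OF group _ g] gen
    by (simp add: carrier)
  then have ord: "group.ord ?G g = CARD('a) - 1"
    by (simp add: ring_of_type_algebra_def card_Diff_singleton)
  show thesis
  proof
    show "g \<noteq> 0"
      using g unfolding carrier by simp
    show "\<exists>i. x = g ^ i" if "x \<noteq> 0" for x
      using that gen unfolding carrier pow by auto
    show "g ^ n = 1 \<longleftrightarrow> CARD('a) - 1 dvd n" for n
      using group.pow_eq_id[OF group g, of n] unfolding pow ord
      by (simp add: ring_of_type_algebra_def)
  qed
qed

lemma power_CARD_minus_one_eq_1:
  fixes x :: "'a::{finite,field}"
  assumes "x \<noteq> 0"
  shows "x ^ (CARD('a) - 1) = 1"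
proof -
  obtain g :: 'a where gen: "\<And>x. x \<noteq> 0 \<Longrightarrow> \<exists>i. x = g ^ i"
    and order: "\<And>n. g ^ n = 1 \<longleftrightarrow> CARD('a) - 1 dvd n"
    using finite_field_cyclic[where 'a='a] by blast
  obtain i where "x = g ^ i"
    using gen assms by blast
  then show ?thesis
    using order by (simp flip: power_mult)
qed

lemma power_CARD_eq_self: "(x::'a::{finite,field}) ^ CARD('a) = x"
proof (cases "x = 0")
  case False
  have "x ^ CARD('a) = x * x ^ (CARD('a) - 1)"
    using two_le_card_finite_field[where 'a='a] by (simp flip: power_Suc)
  then show ?thesis
    using power_CARD_minus_one_eq_1[OF False] by simp
qed (use two_le_card_finite_field[where 'a='a] in simp)

definition add_closed :: "'a::semiring_1 set \<Rightarrow> bool" where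
  "add_closed V \<longleftrightarrow> 0 \<in> V \<and> (\<forall>a\<in>V. \<forall>b\<in>V. a + b \<in> V)"

lemma add_closed_of_nat_mult:
  assumes "add_closed V" "a \<in> V"
  shows "of_nat m * a \<in> V"
proof (induction m)
  case (Suc m)
  then show ?case
    using assms by (simp add: add_closed_def algebra_simps)
qed (use assms in \<open>simp add: add_closed_def\<close>)

lemma add_closed_diff:
  fixes V :: "'a::ring_1 set"
  assumes "CHAR('a) > 0" "add_closed V" "a \<in> V" "b \<in> V"
  shows "b - a \<in> V"
proof -
  have "(of_nat (CHAR('a) - 1) :: 'a) = - 1"
    using assms(1) by (simp add: of_nat_diff)
  then have "b - a = b + of_nat (CHAR('a) - 1) * a"
    by simp
  moreover have "b + of_nat (CHAR('a) - 1) * a \<in> V"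
    using assms(2,4) add_closed_of_nat_mult[OF assms(2,3)] by (simp add: add_closed_def)
  ultimately show ?thesis
    by metis
qed

lemma add_closed_of_nat_mult_cancel:
  fixes V :: "'a::ring_1 set"
  assumes "prime CHAR('a)" "add_closed V" "of_nat i * v \<in> V" "\<not> CHAR('a) dvd i"
  shows "v \<in> V"
proof -
  have "coprime i CHAR('a)"
    using prime_imp_coprime[OF assms(1,4)] by (simp add: coprime_commute)
  then obtain s where "[i * s = 1] (mod CHAR('a))"
    using cong_solve_coprime_nat by auto
  then have "(of_nat (i * s) :: 'a) = 1"
    by (simp add: of_nat_eq_iff_cong_CHAR[where 'a='a, of "i * s" 1, simplified])
  then have "of_nat s * (of_nat i * v) = v"
    by (metis mult.assoc mult.commute mult_1 of_nat_mult)
  then show ?thesis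
    using add_closed_of_nat_mult[OF assms(2,3), of s] by simp
qed

lemma add_closed_extend:
  fixes V :: "'a::ring_1 set" and v :: 'a
  assumes p: "CHAR('a) > 0" and V: "add_closed V"
  defines "W \<equiv> (\<lambda>(a, j). a + of_nat j * v) ` (V \<times> {..<CHAR('a)})"
  shows "add_closed W" and "insert v V \<subseteq> W"
proof -
  let ?p = "CHAR('a)"
  have mem: "a + of_nat j * v \<in> W" if "a \<in> V" for a j
  proof -
    have "(of_nat (j mod ?p) :: 'a) = of_nat j"
      by (simp add: of_nat_eq_iff_cong_CHAR cong_def)
    then have "a + of_nat j * v = a + of_nat (j mod ?p) * v"
      by simp
    then show ?thesis
      unfolding W_def using that p by force
  qed
  show "add_closed W"
    unfolding add_closed_def
  proof (intro conjI ballI)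
    show "0 \<in> W"
      using mem[of 0 0] V by (simp add: add_closed_def)
    fix x y assume "x \<in> W" "y \<in> W"
    then obtain a j b k where ab: "a \<in> V" "b \<in> V"
      and xy: "x = a + of_nat j * v" "y = b + of_nat k * v"
      unfolding W_def by auto
    have "x + y = (a + b) + of_nat (j + k) * v"
      unfolding xy by (simp add: algebra_simps)
    then show "x + y \<in> W"
      using mem[of "a + b" "j + k"] V ab by (simp add: add_closed_def)
  qed
  show "insert v V \<subseteq> W"
    using mem[of 0 1] mem[of _ 0] V by (auto simp: add_closed_def)
qed

lemma inj_on_add_closed_extend:
  fixes V :: "'a::ring_1 set"
  assumes p: "prime CHAR('a)" and V: "add_closed V" and v: "v \<notin> V"
  shows "inj_on (\<lambda>(a, j). a + of_nat j * v) (V \<times> {..<CHAR('a)})"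
proof -
  let ?p = "CHAR('a)"
  have less: False
    if "a \<in> V" "b \<in> V" "k < j" "j < ?p" "a + of_nat j * v = b + of_nat k * v" for a b j k
  proof -
    have "of_nat (j - k) * v = b - a"
      using that(3,5) by (simp add: of_nat_diff algebra_simps)
    then have "of_nat (j - k) * v \<in> V"
      using add_closed_diff[OF _ V that(1,2)] p prime_gt_0_nat by simp
    moreover have "\<not> ?p dvd j - k"
      using that(3,4) by (simp add: nat_dvd_not_less)
    ultimately show False
      using add_closed_of_nat_mult_cancel[OF p V] v by blast
  qed
  show ?thesis
  proof (rule inj_onI, clarsimp)
    fix a j b k assume "a \<in> V" "j < ?p" "b \<in> V" "k < ?p" "a + of_nat j * v = b + of_nat k * v"
    then show "a = b \<and> j = k"
      using less[of a b k j] less[of b a j k] by (cases j k rule: linorder_cases) auto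
  qed
qed

text \<open>Starting from \<open>{0}\<close>, repeatedly adjoin all multiples \<open>j v\<close>, \<open>j < p\<close>, of an element \<open>v\<close>
  outside; each step multiplies the cardinality by \<open>p\<close>.\<close>
lemma card_eq_CHAR_power:
  assumes "prime CHAR('a::{finite,ring_1})"
  shows "\<exists>n. CARD('a) = CHAR('a) ^ n"
proof -
  have "\<exists>n. CARD('a) = CHAR('a) ^ n"
    if "add_closed V" "card V = CHAR('a) ^ k" for V :: "'a set" and k
    using that
  proof (induction "card (UNIV - V)" arbitrary: V k rule: less_induct)
    case less
    show ?case
    proof (cases "V = UNIV")
      case False
      then obtain v where v: "v \<notin> V"
        by auto
      define W where "W = (\<lambda>(a, j). a + of_nat j * v) ` (V \<times> {..<CHAR('a)})"
      note W = add_closed_extend[OF prime_gt_0_nat[OF assms] less.prems(1), of v, folded W_def]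
      have "card (UNIV - W) < card (UNIV - V)"
        using W(2) v by (intro psubset_card_mono) auto
      moreover have "card W = CHAR('a) ^ Suc k"
        using inj_on_add_closed_extend[OF assms less.prems(1) v] less.prems(2)
        by (simp add: W_def card_image card_cartesian_product)
      ultimately show ?thesis
        using less.hyps W(1) by blast
    qed (use less.prems in auto)
  qed
  moreover have "add_closed {0::'a}" "card {0::'a} = CHAR('a) ^ 0"
    by (simp_all add: add_closed_def)
  ultimately show ?thesis
    by blast
qed

section \<open>The trace and the additive character\<close>

lemma card_eq_CHAR_power_field_degree: "CARD('a::{finite,field}) = CHAR('a) ^ field_degree TYPE('a)"
proof -
  have "\<exists>!n. CARD('a) = CHAR('a) ^ n"
    using card_eq_CHAR_power[OF prime_CHAR_finite_field]
      prime_gt_1_nat[OF prime_CHAR_finite_field[where 'a='a]]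
    by (auto simp: power_inject_exp)
  then show ?thesis
    unfolding field_degree_def by (rule theI')
qed

lemma field_degree_pos: "field_degree TYPE('a::{finite,field}) > 0"
  using card_eq_CHAR_power_field_degree[where 'a='a] two_le_card_finite_field[where 'a='a]
  by (cases "field_degree TYPE('a)") auto

lemma ftrace_add: "ftrace (x + y :: 'a::{finite,field}) = ftrace x + ftrace y"
  unfolding ftrace_def by (simp add: sum.distrib freshmans_dream'[OF prime_CHAR_finite_field])

lemma ftrace_zero: "ftrace (0::'a::{finite,field}) = 0"
  using ftrace_add[of "0::'a" 0] by (metis add_0 add_cancel_right_right)

lemma ftrace_power_CHAR: "ftrace (x::'a::{finite,field}) ^ CHAR('a) = ftrace x"
proof -
  let ?p = "CHAR('a)" and ?n = "field_degree TYPE('a)"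
  let ?f = "\<lambda>i. x ^ (?p ^ i)"
  have "ftrace x ^ ?p = (\<Sum>i<?n. ?f (Suc i))"
    unfolding ftrace_def freshmans_dream_sum[OF prime_CHAR_finite_field refl]
    by (simp add: power_mult[symmetric] mult.commute)
  also have "\<dots> = (\<Sum>i<Suc ?n. ?f i) - ?f 0"
    by (simp only: sum.lessThan_Suc_shift) simp
  also have "\<dots> = (\<Sum>i<?n. ?f i) + ?f ?n - ?f 0"
    by simp
  also have "?f ?n = ?f 0"
    using power_CARD_eq_self[of x] by (simp flip: card_eq_CHAR_power_field_degree)
  finally show ?thesis
    unfolding ftrace_def by simp
qed

lemma of_nat_power_CHAR:
  assumes "prime CHAR('a::comm_semiring_1)"
  shows "(of_nat k :: 'a) ^ CHAR('a) = of_nat k"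
proof (induction k)
  case 0
  then show ?case
    using assms prime_gt_0_nat by (simp add: power_0_left)
next
  case (Suc k)
  then show ?case
    using freshmans_dream[OF assms refl, of "of_nat k" 1] by (simp add: add.commute)
qed

text \<open>\<open>X\<^sup>p - X\<close> has at most \<open>p\<close> roots, and the \<open>p\<close> elements \<open>of_nat k\<close> are among them.\<close>
lemma power_CHAR_eq_self_imp_of_nat:
  fixes y :: "'a::field"
  assumes p: "prime CHAR('a)" and y: "y ^ CHAR('a) = y"
  shows "\<exists>k < CHAR('a). y = of_nat k"
proof -
  let ?p = "CHAR('a)"
  define P :: "'a poly" where "P = monom 1 ?p - [:0, 1:]"
  have p1: "?p > 1"
    using p prime_gt_1_nat by blast
  have "coeff P ?p = 1"
    using p1 by (simp add: P_def coeff_pCons split: nat.splits)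
  then have P0: "P \<noteq> 0"
    by auto
  have "degree P \<le> ?p"
    using p1 by (intro degree_le) (auto simp: P_def coeff_pCons split: nat.splits)
  then have "card {z. poly P z = 0} \<le> ?p"
    using card_poly_roots_bound[OF P0] by linarith
  moreover have roots: "of_nat ` {..<?p} \<subseteq> {z. poly P z = 0}"
    by (auto simp: P_def poly_monom of_nat_power_CHAR[OF p])
  moreover have "card (of_nat ` {..<?p} :: 'a set) = ?p"
    by (subst card_image) (auto simp: inj_on_def of_nat_eq_iff_cong_CHAR cong_less_modulus_unique_nat)
  ultimately have "of_nat ` {..<?p} = {z. poly P z = 0}"
    using card_mono[OF poly_roots_finite[OF P0] roots]
    by (intro card_subset_eq[OF poly_roots_finite[OF P0]]) auto
  moreover have "poly P y = 0"
    using y by (simp add: P_def poly_monom)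
  ultimately show ?thesis
    by force
qed

lemma ftrace_in_prime_field: "\<exists>k < CHAR('a). ftrace (x::'a::{finite,field}) = of_nat k"
  using power_CHAR_eq_self_imp_of_nat[OF prime_CHAR_finite_field ftrace_power_CHAR] .

text \<open>As a polynomial in \<open>x\<close>, \<open>ftrace x\<close> has degree \<open>p\<^sup>n\<^sup>-\<^sup>1 < q\<close>, so it cannot vanish on all of \<open>'a\<close>.\<close>
lemma ftrace_nonzero: "\<exists>x::'a::{finite,field}. ftrace x \<noteq> 0"
proof (rule ccontr)
  assume "\<nexists>x::'a. ftrace x \<noteq> 0"
  let ?p = "CHAR('a)" and ?n = "field_degree TYPE('a)"
  define P :: "'a poly" where "P = (\<Sum>i<?n. monom 1 (?p ^ i))"
  have n0: "?n > 0" and p1: "?p > 1"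
    using field_degree_pos prime_gt_1_nat[OF prime_CHAR_finite_field] by auto
  have coeff: "coeff P j = (\<Sum>i<?n. if ?p ^ i = j then 1 else 0)" for j
    by (simp add: P_def coeff_sum coeff_monom)
  have "coeff P (?p ^ (?n - 1)) = 1"
    unfolding coeff using n0 p1 
    by (subst sum.remove[of _ "?n - 1"]) (auto simp: power_inject_exp intro!: sum.neutral)
  then have P0: "P \<noteq> 0"
    by auto
  have "?p ^ i < j" if "i < ?n" "?p ^ (?n - 1) < j" for i j
  proof -
    have "?p ^ i \<le> ?p ^ (?n - 1)"
      using that(1) p1 by (intro power_increasing) auto
    then show ?thesis
      using that(2) by linarith
  qed
  then have "degree P \<le> ?p ^ (?n - 1)"
    by (intro degree_le) (force simp: coeff intro!: sum.neutral)
  moreover have "{x. poly P x = 0} = UNIV"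
    using \<open>\<nexists>x. ftrace x \<noteq> 0\<close> by (auto simp: P_def poly_sum poly_monom ftrace_def)
  ultimately have "CARD('a) \<le> ?p ^ (?n - 1)"
    using card_poly_roots_bound[OF P0] by simp
  moreover have "?p ^ (?n - 1) < ?p ^ ?n"
    using p1 n0 by (intro power_strict_increasing) auto
  ultimately show False
    by (simp flip: card_eq_CHAR_power_field_degree)
qed

lemma addchar_eq_power:
  fixes x :: "'a::{finite,field}"
  assumes "\<zeta> ^ CHAR('a) = 1" and "ftrace x = of_nat k"
  shows "addchar \<zeta> x = \<zeta> ^ k"
proof -
  obtain k0 where k0: "k0 < CHAR('a)" "ftrace x = of_nat k0"
    using ftrace_in_prime_field by blast
  have "(THE k. k < CHAR('a) \<and> of_nat k = ftrace x) = k0"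
    using k0 by (intro the_equality) (auto simp: of_nat_eq_iff_cong_CHAR cong_less_modulus_unique_nat)
  moreover have "[k0 = k] (mod CHAR('a))"
    using k0(2) assms(2) by (simp flip: of_nat_eq_iff_cong_CHAR)
  ultimately show ?thesis
    unfolding addchar_def using power_eq_if_cong[OF assms(1)] by simp
qed

lemma addchar_add:
  fixes x y :: "'a::{finite,field}"
  assumes "\<zeta> ^ CHAR('a) = 1"
  shows "addchar \<zeta> (x + y) = addchar \<zeta> x * addchar \<zeta> y"
proof -
  obtain j k where j: "ftrace x = of_nat j" and k: "ftrace y = of_nat k"
    using ftrace_in_prime_field by metis
  then have "ftrace (x + y) = of_nat (j + k)"
    by (simp add: ftrace_add)
  then have "addchar \<zeta> (x + y) = \<zeta> ^ (j + k)"
    by (rule addchar_eq_power[OF assms])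
  then show ?thesis
    using addchar_eq_power[OF assms j] addchar_eq_power[OF assms k] by (simp add: power_add)
qed

lemma addchar_zero: "\<zeta> ^ CHAR('a) = 1 \<Longrightarrow> addchar \<zeta> (0::'a::{finite,field}) = 1"
  using addchar_eq_power[of \<zeta> 0 0] by (simp add: ftrace_zero)

lemma sum_addchar_nonzero:
  assumes "\<zeta> ^ CHAR('a) = 1" and "\<forall>k. 0 < k \<and> k < CHAR('a) \<longrightarrow> \<zeta> ^ k \<noteq> 1"
  shows "(\<Sum>x\<in>UNIV - {0}. addchar \<zeta> (x::'a::{finite,field})) = -1"
proof -
  obtain x0 :: 'a and k where "ftrace x0 \<noteq> 0" "k < CHAR('a)" "ftrace x0 = of_nat k"
    using ftrace_nonzero ftrace_in_prime_field by metis
  then have "0 < k"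
    by (metis of_nat_0 neq0_conv)
  then have x0: "addchar \<zeta> x0 \<noteq> 1"
    using assms(2) \<open>k < CHAR('a)\<close> addchar_eq_power[OF assms(1) \<open>ftrace x0 = of_nat k\<close>] by simp
  have "(\<Sum>x\<in>UNIV. addchar \<zeta> (x::'a)) = (\<Sum>x\<in>UNIV. addchar \<zeta> (x + x0))"
    by (rule sum.reindex_bij_witness[of _ "\<lambda>x. x + x0" "\<lambda>x. x - x0"]) auto
  also have "\<dots> = (\<Sum>x\<in>UNIV. addchar \<zeta> (x::'a)) * addchar \<zeta> x0"
    by (simp add: addchar_add[OF assms(1)] sum_distrib_right)
  finally have "(\<Sum>x\<in>UNIV. addchar \<zeta> (x::'a)) = 0"
    using x0 mult_cancel_left1 by blast
  then show ?thesis
    using sum.remove[of UNIV 0 "addchar \<zeta> :: 'a \<Rightarrow> complex"] addchar_zero[OF assms(1)]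
    by (simp add: Diff_eq eq_neg_iff_add_eq_0 add.commute)
qed

section \<open>Multiplicative characters\<close>

lemma mult_char_one: "mult_char \<chi> \<Longrightarrow> \<chi> 1 = 1"
  by (simp add: mult_char_def)

lemma mult_char_mult: "mult_char \<chi> \<Longrightarrow> x \<noteq> 0 \<Longrightarrow> y \<noteq> 0 \<Longrightarrow> \<chi> (x * y) = \<chi> x * \<chi> y"
  by (simp add: mult_char_def)

lemma mult_char_inverse:
  assumes "mult_char \<chi>" "(x::'a::{finite,field}) \<noteq> 0"
  shows "\<chi> (inverse x) = inverse (\<chi> x)"
  using mult_char_mult[OF assms(1), of x "inverse x"] assms
  by (simp add: mult_char_one inverse_unique)

lemma mult_char_nonzero: "mult_char \<chi> \<Longrightarrow> (x::'a::{finite,field}) \<noteq> 0 \<Longrightarrow> \<chi> x \<noteq> 0"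
  using mult_char_mult[of \<chi> x "inverse x"] by (auto simp: mult_char_one)

lemma mult_char_power: "mult_char \<chi> \<Longrightarrow> (x::'a::{finite,field}) \<noteq> 0 \<Longrightarrow> \<chi> (x ^ k) = \<chi> x ^ k"
  by (induction k) (simp_all add: mult_char_one mult_char_mult)

lemma mult_char_uminus: "mult_char \<chi> \<Longrightarrow> (x::'a::{finite,field}) \<noteq> 0 \<Longrightarrow> \<chi> (- x) = \<chi> (- 1) * \<chi> x"
  using mult_char_mult[of \<chi> "- 1" x] by simp

lemma mult_char_power_CARD_minus_one:
  "mult_char \<chi> \<Longrightarrow> (x::'a::{finite,field}) \<noteq> 0 \<Longrightarrow> \<chi> x ^ (CARD('a) - 1) = 1"
  using mult_char_power[of \<chi> x "CARD('a) - 1"] power_CARD_minus_one_eq_1[of x]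
  by (simp add: mult_char_one)

lemma mult_char_power_eq_1_if_dvd:
  assumes "mult_char \<chi>" "(x::'a::{finite,field}) \<noteq> 0" "CARD('a) - 1 dvd m"
  shows "\<chi> x ^ m = 1"
  using mult_char_power_CARD_minus_one[OF assms(1,2)] assms(3) by (auto elim!: dvdE simp: power_mult)

lemma mult_char_times: "mult_char \<chi>\<^sub>1 \<Longrightarrow> mult_char \<chi>\<^sub>2 \<Longrightarrow> mult_char (\<lambda>x. \<chi>\<^sub>1 x * \<chi>\<^sub>2 x)"
  by (simp add: mult_char_def mult_ac)

lemma mult_char_power_fun: "mult_char \<chi> \<Longrightarrow> mult_char (\<lambda>x. \<chi> x ^ m)"
  by (simp add: mult_char_def power_mult_distrib)

lemma mult_char_inverse_fun: "mult_char \<chi> \<Longrightarrow> mult_char (\<lambda>x. inverse (\<chi> x))"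
  by (simp add: mult_char_def)

lemma sum_mult_char_nontrivial:
  assumes "mult_char \<chi>" "(a::'a::{finite,field}) \<noteq> 0" "\<chi> a \<noteq> 1"
  shows "(\<Sum>x\<in>UNIV - {0}. \<chi> x) = 0"
proof -
  have "(\<Sum>x\<in>UNIV - {0}. \<chi> x) = (\<Sum>x\<in>UNIV - {0}. \<chi> (a * x))"
    by (rule sum.reindex_bij_witness[of _ "\<lambda>x. a * x" "\<lambda>x. x / a"]) (use assms(2) in auto)
  also have "\<dots> = \<chi> a * (\<Sum>x\<in>UNIV - {0}. \<chi> x)"
    using assms(1,2) by (simp add: sum_distrib_left mult_char_mult)
  finally show ?thesis
    using assms(3) by (metis mult_cancel_right1 mult.commute)
qed

lemma sum_mult_char_nontrivial_diff_one:
  assumes "mult_char \<chi>" "(a::'a::{finite,field}) \<noteq> 0" "\<chi> a \<noteq> 1"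
  shows "(\<Sum>x\<in>UNIV - {0, 1}. \<chi> x) = -1"
  using sum.remove[of "UNIV - {0}" 1 \<chi>] sum_mult_char_nontrivial[OF assms]
  by (simp add: mult_char_one[OF assms(1)] Diff_insert2 [symmetric] eq_neg_iff_add_eq_0 add.commute)

lemma cis_power_eq_1_iff:
  fixes n k :: nat
  assumes "n > 0"
  shows "cis (2 * pi / n) ^ k = 1 \<longleftrightarrow> n dvd k"
proof -
  have "real k * (2 * pi / n) = of_int i * (2 * pi) \<longleftrightarrow> int k = i * int n" for i :: int
  proof -
    have "real k * (2 * pi / n) = of_int i * (2 * pi) \<longleftrightarrow> (real k / n) * (2 * pi) = of_int i * (2 * pi)"
      by simp
    also have "\<dots> \<longleftrightarrow> real k / n = of_int i"
      by (simp only: mult_cancel_right) simp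
    also have "\<dots> \<longleftrightarrow> real k = of_int i * n"
      using assms by (simp add: field_simps)
    also have "\<dots> \<longleftrightarrow> int k = i * int n"
      by (metis of_int_eq_iff of_int_mult of_int_of_nat_eq)
    finally show ?thesis .
  qed
  then have "cis (2 * pi / n) ^ k = 1 \<longleftrightarrow> (\<exists>i::int. int k = i * int n)"
    by (simp add: DeMoivre cis_eq_1_iff)
  also have "\<dots> \<longleftrightarrow> int n dvd int k"
    by (auto simp: dvd_def mult.commute)
  finally show ?thesis
    by (simp only: int_dvd_int_iff)
qed

lemma exists_faithful_mult_char:
  obtains \<chi> :: "'a::{finite,field} \<Rightarrow> complex"
  where "mult_char \<chi>" and "\<And>x. x \<noteq> 0 \<Longrightarrow> \<chi> x = 1 \<Longrightarrow> x = 1"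
proof -
  let ?N = "CARD('a) - 1"
  have N: "?N > 0"
    using two_le_card_finite_field[where 'a='a] by simp
  obtain g :: 'a where gen: "\<And>x. x \<noteq> 0 \<Longrightarrow> \<exists>i. x = g ^ i"
    and g_order: "\<And>n. g ^ n = 1 \<longleftrightarrow> ?N dvd n"
    using finite_field_cyclic[where 'a='a] by blast
  define z where "z = cis (2 * pi / ?N)"
  have z_order: "z ^ k = 1 \<longleftrightarrow> ?N dvd k" for k
    unfolding z_def by (rule cis_power_eq_1_iff[OF N])
  have g_eq_z: "g ^ a = g ^ b \<longleftrightarrow> z ^ a = z ^ b" for a b
    using power_eq_power_iff_cong[OF g_order N] power_eq_power_iff_cong[OF z_order N] by simp
  define dlog where "dlog x = (SOME i. x = g ^ i)" for x
  have dlog: "g ^ dlog x = x" if "x \<noteq> 0" for x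
    unfolding dlog_def using someI_ex[OF gen[OF that]] by simp
  define \<chi> where "\<chi> x = z ^ dlog x" for x
  show thesis
  proof
    show "mult_char \<chi>"
      unfolding mult_char_def
    proof (intro conjI allI impI)
      show "\<chi> 1 = 1"
        using g_eq_z[of "dlog 1" 0] dlog[of 1] by (simp add: \<chi>_def)
      fix x y :: 'a assume "x \<noteq> 0" "y \<noteq> 0"
      then have "g ^ dlog (x * y) = g ^ (dlog x + dlog y)"
        by (simp add: dlog power_add)
      then show "\<chi> (x * y) = \<chi> x * \<chi> y"
        unfolding g_eq_z by (simp add: \<chi>_def power_add)
    qed
    show "x = 1" if "x \<noteq> 0" "\<chi> x = 1" for x
      using that g_eq_z[of "dlog x" 0] dlog[OF that(1)] by (simp add: \<chi>_def)
  qed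
qed

lemma char_generator_mult_char: "char_generator \<omega> \<Longrightarrow> mult_char \<omega>"
  by (simp add: char_generator_def)

lemma char_generator_faithful:
  assumes "char_generator \<omega>" "(x::'a::{finite,field}) \<noteq> 0" "\<omega> x = 1"
  shows "x = 1"
proof -
  obtain \<chi> :: "'a \<Rightarrow> complex" where "mult_char \<chi>" and faithful: "\<And>x. x \<noteq> 0 \<Longrightarrow> \<chi> x = 1 \<Longrightarrow> x = 1"
    using exists_faithful_mult_char[where 'a='a] by blast
  then obtain m where "\<forall>x. x \<noteq> 0 \<longrightarrow> \<chi> x = \<omega> x ^ m"
    using assms(1) unfolding char_generator_def by blast
  then show ?thesis
    using assms faithful by simp
qed

lemma sum_lessThan_char_generator_power:
  assumes "char_generator \<omega>" "(u::'a::{finite,field}) \<noteq> 0"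
  shows "(\<Sum>m<CARD('a) - 1. \<omega> u ^ m) = (if u = 1 then of_nat (CARD('a) - 1) else 0)"
proof -
  note mc = char_generator_mult_char[OF assms(1)]
  show ?thesis
  proof (cases "u = 1")
    case False
    then have "\<omega> u \<noteq> 1"
      using char_generator_faithful[OF assms] by blast
    then show ?thesis
      using False mult_char_power_CARD_minus_one[OF mc assms(2)] by (simp add: sum_gp_strict)
  qed (simp add: mult_char_one[OF mc])
qed

lemma sum_nonzero_char_generator_power:
  fixes \<omega> :: "'a::{finite,field} \<Rightarrow> complex"
  assumes "char_generator \<omega>"
  shows "(\<Sum>y\<in>UNIV - {0}. \<omega> y ^ m) = (if CARD('a) - 1 dvd m then of_nat (CARD('a) - 1) else 0)"
proof -
  let ?N = "CARD('a) - 1"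
  note mc = char_generator_mult_char[OF assms(1)]
  show ?thesis
  proof (cases "?N dvd m")
    case True
    then have "\<omega> y ^ m = 1" if "y \<noteq> 0" for y
      by (rule mult_char_power_eq_1_if_dvd[OF mc that])
    then show ?thesis
      using True by (simp add: card_Diff_singleton)
  next
    case False
    obtain g :: 'a where "g \<noteq> 0" and g_order: "\<And>n. g ^ n = 1 \<longleftrightarrow> ?N dvd n"
      using finite_field_cyclic[where 'a='a] by blast
    then have "\<omega> g ^ m \<noteq> 1"
      using char_generator_faithful[OF assms, of "g ^ m"] mult_char_power[OF mc \<open>g \<noteq> 0\<close>, of m]
        g_order[of m] False by auto
    then show ?thesis
      using False sum_mult_char_nontrivial[OF mult_char_power_fun[OF mc] \<open>g \<noteq> 0\<close>] by simp
  qed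
qed

lemma quad_char_mult_char: "quad_char \<phi> \<Longrightarrow> mult_char \<phi>"
  by (simp add: quad_char_def)

lemma quad_char_cases: "quad_char \<phi> \<Longrightarrow> (x::'a::{finite,field}) \<noteq> 0 \<Longrightarrow> \<phi> x = 1 \<or> \<phi> x = -1"
  unfolding quad_char_def by (metis power2_eq_1_iff)

lemma quad_char_inverse_eq: "quad_char \<phi> \<Longrightarrow> (x::'a::{finite,field}) \<noteq> 0 \<Longrightarrow> inverse (\<phi> x) = \<phi> x"
  using quad_char_cases by fastforce

lemma quad_char_square:
  assumes "quad_char \<phi>" "(x::'a::{finite,field}) \<noteq> 0"
  shows "\<phi> (x ^ 2) = 1"
  using mult_char_power[OF quad_char_mult_char[OF assms(1)] assms(2), of 2] assms
  unfolding quad_char_def by simp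

lemma quad_char_eq_one_imp_square:
  assumes "quad_char \<phi>" "(x::'a::{finite,field}) \<noteq> 0" "\<phi> x = 1"
  shows "\<exists>s. s ^ 2 = x"
proof -
  have \<phi>: "mult_char \<phi>"
    using assms(1) by (rule quad_char_mult_char)
  obtain g :: 'a where "g \<noteq> 0" and gen: "\<And>x. x \<noteq> 0 \<Longrightarrow> \<exists>i. x = g ^ i"
    using finite_field_cyclic[where 'a='a] by blast
  have "\<phi> g \<noteq> 1"
  proof
    assume "\<phi> g = 1"
    then have "\<phi> y = 1" if "y \<noteq> 0" for y
      using gen[OF that] mult_char_power[OF \<phi> \<open>g \<noteq> 0\<close>] by auto
    then show False
      using assms(1) unfolding quad_char_def by blast
  qed
  then have "\<phi> g = -1"
    using quad_char_cases[OF assms(1) \<open>g \<noteq> 0\<close>] by simp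
  obtain i where i: "x = g ^ i"
    using gen[OF assms(2)] by blast
  then have "(-1::complex) ^ i = 1"
    using assms(3) mult_char_power[OF \<phi> \<open>g \<noteq> 0\<close>, of i] \<open>\<phi> g = -1\<close> by simp
  then obtain j where "i = 2 * j"
    by (metis evenE neg_one_odd_power one_neq_neg_one)
  then have "(g ^ j) ^ 2 = x"
    using i by (simp add: power_mult[symmetric] mult.commute)
  then show ?thesis
    by blast
qed

lemma card_square_roots:
  fixes D :: "'a::{finite,field}"
  assumes "quad_char \<phi>" "(2::'a) \<noteq> 0" "D \<noteq> 0"
  shows "of_nat (card {z. z ^ 2 = D}) = 1 + \<phi> D"
proof (cases "\<phi> D = 1")
  case True
  then obtain s where s: "s ^ 2 = D"
    using quad_char_eq_one_imp_square[OF assms(1,3)] by blast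
  then have "s \<noteq> - s"
    using assms(2,3) by (auto simp flip: mult_2)
  moreover have "{z. z ^ 2 = D} = {s, - s}"
    using s by (auto simp: power2_eq_iff)
  ultimately show ?thesis
    using True by simp
next
  case False
  then have "\<phi> D = -1"
    using quad_char_cases[OF assms(1,3)] by simp
  moreover have "{z. z ^ 2 = D} = {}"
    using quad_char_square[OF assms(1)] False assms(3) by force
  ultimately show ?thesis
    by simp
qed

section \<open>Gauss and Jacobi sums\<close>

definition jacobi_sum :: "('a::{finite,field} \<Rightarrow> complex) \<Rightarrow> ('a \<Rightarrow> complex) \<Rightarrow> complex" where
  "jacobi_sum \<chi>\<^sub>1 \<chi>\<^sub>2 = (\<Sum>a\<in>UNIV - {0, 1}. \<chi>\<^sub>1 a * \<chi>\<^sub>2 (1 - a))"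

lemma jacobi_sum_scale:
  fixes \<chi>\<^sub>1 \<chi>\<^sub>2 :: "'a::{finite,field} \<Rightarrow> complex"
  assumes \<chi>\<^sub>1: "mult_char \<chi>\<^sub>1" and \<chi>\<^sub>2: "mult_char \<chi>\<^sub>2" and "s \<noteq> 0"
  shows "(\<Sum>x\<in>UNIV - {0, s}. \<chi>\<^sub>1 x * \<chi>\<^sub>2 (s - x)) = \<chi>\<^sub>1 s * \<chi>\<^sub>2 s * jacobi_sum \<chi>\<^sub>1 \<chi>\<^sub>2"
proof -
  have "(\<Sum>x\<in>UNIV - {0, s}. \<chi>\<^sub>1 x * \<chi>\<^sub>2 (s - x)) = (\<Sum>a\<in>UNIV - {0, 1}. \<chi>\<^sub>1 (s * a) * \<chi>\<^sub>2 (s - s * a))"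
    by (rule sum.reindex_bij_witness[of _ "\<lambda>a. s * a" "\<lambda>x. x / s"]) (use \<open>s \<noteq> 0\<close> in auto)
  also have "\<dots> = (\<Sum>a\<in>UNIV - {0, 1}. \<chi>\<^sub>1 s * \<chi>\<^sub>2 s * (\<chi>\<^sub>1 a * \<chi>\<^sub>2 (1 - a)))"
  proof (rule sum.cong[OF refl])
    fix a assume "a \<in> UNIV - {0, 1::'a}"
    moreover have "s - s * a = s * (1 - a)"
      by (simp add: algebra_simps)
    ultimately show "\<chi>\<^sub>1 (s * a) * \<chi>\<^sub>2 (s - s * a) = \<chi>\<^sub>1 s * \<chi>\<^sub>2 s * (\<chi>\<^sub>1 a * \<chi>\<^sub>2 (1 - a))"
      using \<open>s \<noteq> 0\<close> by (simp add: mult_char_mult[OF \<chi>\<^sub>1] mult_char_mult[OF \<chi>\<^sub>2] mult_ac)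
  qed
  finally show ?thesis
    by (simp add: jacobi_sum_def sum_distrib_left)
qed

lemma gauss_sum_mult_gauss_sum:
  fixes \<chi>\<^sub>1 \<chi>\<^sub>2 :: "'a::{finite,field} \<Rightarrow> complex"
  assumes \<zeta>: "\<zeta> ^ CHAR('a) = 1" and \<chi>\<^sub>1: "mult_char \<chi>\<^sub>1" and \<chi>\<^sub>2: "mult_char \<chi>\<^sub>2"
  shows "gauss_sum \<zeta> \<chi>\<^sub>1 * gauss_sum \<zeta> \<chi>\<^sub>2 =
    (\<Sum>x\<in>UNIV - {0}. \<chi>\<^sub>1 x * \<chi>\<^sub>2 (- x)) + jacobi_sum \<chi>\<^sub>1 \<chi>\<^sub>2 * gauss_sum \<zeta> (\<lambda>x. \<chi>\<^sub>1 x * \<chi>\<^sub>2 x)"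
proof -
  let ?S = "UNIV - {0::'a}"
  let ?\<psi> = "addchar \<zeta> :: 'a \<Rightarrow> complex"
  define F where "F x s = \<chi>\<^sub>1 x * \<chi>\<^sub>2 (s - x) * ?\<psi> s" for x s
  have "gauss_sum \<zeta> \<chi>\<^sub>1 * gauss_sum \<zeta> \<chi>\<^sub>2 = (\<Sum>x\<in>?S. \<Sum>y\<in>?S. \<chi>\<^sub>1 x * \<chi>\<^sub>2 y * ?\<psi> (x + y))"
    unfolding gauss_sum_def sum_product by (simp add: addchar_add[OF \<zeta>] mult_ac)
  also have "\<dots> = (\<Sum>x\<in>?S. \<Sum>s\<in>{s\<in>UNIV. s \<noteq> x}. F x s)"
  proof (rule sum.cong[OF refl])
    fix x assume "x \<in> ?S"
    show "(\<Sum>y\<in>?S. \<chi>\<^sub>1 x * \<chi>\<^sub>2 y * ?\<psi> (x + y)) = (\<Sum>s\<in>{s\<in>UNIV. s \<noteq> x}. F x s)"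
      by (rule sum.reindex_bij_witness[of _ "\<lambda>s. s - x" "\<lambda>y. x + y"]) (auto simp: F_def)
  qed
  also have "\<dots> = (\<Sum>s\<in>UNIV. \<Sum>x\<in>{x\<in>?S. s \<noteq> x}. F x s)"
    by (rule sum.swap_restrict) auto
  also have "\<dots> = (\<Sum>x\<in>{x\<in>?S. 0 \<noteq> x}. F x 0) + (\<Sum>s\<in>?S. \<Sum>x\<in>{x\<in>?S. s \<noteq> x}. F x s)"
    by (rule sum.remove) auto
  also have "{x\<in>?S. 0 \<noteq> x} = ?S"
    by auto
  also have "(\<Sum>s\<in>?S. \<Sum>x\<in>{x\<in>?S. s \<noteq> x}. F x s) =
      (\<Sum>s\<in>?S. (\<Sum>x\<in>UNIV - {0, s}. \<chi>\<^sub>1 x * \<chi>\<^sub>2 (s - x)) * ?\<psi> s)"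
    unfolding F_def sum_distrib_right by (intro sum.cong) auto
  also have "\<dots> = jacobi_sum \<chi>\<^sub>1 \<chi>\<^sub>2 * gauss_sum \<zeta> (\<lambda>x. \<chi>\<^sub>1 x * \<chi>\<^sub>2 x)"
    unfolding gauss_sum_def sum_distrib_left
    by (intro sum.cong refl) (simp add: jacobi_sum_scale[OF \<chi>\<^sub>1 \<chi>\<^sub>2] mult_ac)
  finally show ?thesis
    by (simp add: F_def addchar_zero[OF \<zeta>])
qed

lemma gauss_sum_mult_eq_jacobi_sum:
  fixes \<chi>\<^sub>1 \<chi>\<^sub>2 :: "'a::{finite,field} \<Rightarrow> complex"
  assumes \<zeta>: "\<zeta> ^ CHAR('a) = 1" and \<chi>\<^sub>1: "mult_char \<chi>\<^sub>1" and \<chi>\<^sub>2: "mult_char \<chi>\<^sub>2"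
    and nontrivial: "b \<noteq> 0" "\<chi>\<^sub>1 b * \<chi>\<^sub>2 b \<noteq> 1"
  shows "gauss_sum \<zeta> \<chi>\<^sub>1 * gauss_sum \<zeta> \<chi>\<^sub>2 = jacobi_sum \<chi>\<^sub>1 \<chi>\<^sub>2 * gauss_sum \<zeta> (\<lambda>x. \<chi>\<^sub>1 x * \<chi>\<^sub>2 x)"
proof -
  have "(\<Sum>x\<in>UNIV - {0}. \<chi>\<^sub>1 x * \<chi>\<^sub>2 (- x)) = (\<Sum>x\<in>UNIV - {0}. \<chi>\<^sub>2 (- 1) * (\<chi>\<^sub>1 x * \<chi>\<^sub>2 x))"
  proof (intro sum.cong refl)
    fix x :: 'a assume "x \<in> UNIV - {0}"
    then show "\<chi>\<^sub>1 x * \<chi>\<^sub>2 (- x) = \<chi>\<^sub>2 (- 1) * (\<chi>\<^sub>1 x * \<chi>\<^sub>2 x)"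
      using mult_char_uminus[OF \<chi>\<^sub>2, of x] by simp
  qed
  also have "\<dots> = \<chi>\<^sub>2 (- 1) * (\<Sum>x\<in>UNIV - {0}. \<chi>\<^sub>1 x * \<chi>\<^sub>2 x)"
    by (simp add: sum_distrib_left)
  also have "(\<Sum>x\<in>UNIV - {0}. \<chi>\<^sub>1 x * \<chi>\<^sub>2 x) = 0"
    by (rule sum_mult_char_nontrivial[OF mult_char_times[OF \<chi>\<^sub>1 \<chi>\<^sub>2] nontrivial])
  finally show ?thesis
    using gauss_sum_mult_gauss_sum[OF \<zeta> \<chi>\<^sub>1 \<chi>\<^sub>2] by simp
qed

lemma jacobi_sum_trivial_right:
  assumes "mult_char \<chi>" "(a::'a::{finite,field}) \<noteq> 0" "\<chi> a \<noteq> 1" "\<And>x. x \<noteq> 0 \<Longrightarrow> \<psi> x = 1"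
  shows "jacobi_sum \<chi> \<psi> = -1"
  using sum_mult_char_nontrivial_diff_one[OF assms(1-3)] assms(4) by (simp add: jacobi_sum_def)

text \<open>\<open>\<chi>(a) \<chi>(1 - a)\<^sup>-\<^sup>1 = \<chi>(c)\<close> for \<open>c = a / (1 - a)\<close>, which runs over all of \<open>'a\<close> except \<open>0\<close> and \<open>-1\<close>.\<close>
lemma jacobi_sum_inverse_char:
  assumes \<chi>: "mult_char \<chi>" and nontrivial: "(b::'a::{finite,field}) \<noteq> 0" "\<chi> b \<noteq> 1"
  shows "jacobi_sum \<chi> (\<lambda>x. inverse (\<chi> x)) = - \<chi> (- 1)"
proof -
  have "jacobi_sum \<chi> (\<lambda>x. inverse (\<chi> x)) = (\<Sum>a\<in>UNIV - {0, 1::'a}. \<chi> (a / (1 - a)))"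
    unfolding jacobi_sum_def
    by (intro sum.cong refl) (simp add: divide_inverse mult_char_mult[OF \<chi>] mult_char_inverse[OF \<chi>])
  also have "\<dots> = (\<Sum>c\<in>UNIV - {0, -1}. \<chi> c)"
  proof (rule sum.reindex_bij_witness[of _ "\<lambda>c. c / (1 + c)" "\<lambda>a. a / (1 - a)"])
    fix a :: 'a assume "a \<in> UNIV - {0, 1}"
    then show "a / (1 - a) / (1 + a / (1 - a)) = a" "a / (1 - a) \<in> UNIV - {0, -1}"
      by (auto simp: field_simps)
  next
    fix c :: 'a assume c: "c \<in> UNIV - {0, -1}"
    then have "1 + c \<noteq> 0"
      by (metis DiffD2 add.commute add_eq_0_iff insertCI)
    then show "c / (1 + c) / (1 - c / (1 + c)) = c" "c / (1 + c) \<in> UNIV - {0, 1}"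
      using c by (auto simp: field_simps)
  qed simp
  also have "\<dots> = (\<Sum>c\<in>UNIV - {0}. \<chi> c) - \<chi> (- 1)"
  proof -
    have "UNIV - {0, -1} = UNIV - {0} - {-1::'a}"
      by auto
    then show ?thesis
      using sum.remove[of "UNIV - {0}" "- 1" \<chi>] by simp
  qed
  finally show ?thesis
    using sum_mult_char_nontrivial[OF assms] by simp
qed

lemma gauss_sum_mult_inverse_char:
  fixes \<chi> :: "'a::{finite,field} \<Rightarrow> complex"
  assumes \<zeta>: "\<zeta> ^ CHAR('a) = 1" "\<forall>k. 0 < k \<and> k < CHAR('a) \<longrightarrow> \<zeta> ^ k \<noteq> 1"
    and \<chi>: "mult_char \<chi>" and nontrivial: "b \<noteq> 0" "\<chi> b \<noteq> 1"
  shows "gauss_sum \<zeta> \<chi> * gauss_sum \<zeta> (\<lambda>x. inverse (\<chi> x)) = \<chi> (- 1) * of_nat CARD('a)"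
proof -
  have "\<chi> (- 1) * \<chi> (- 1) = 1"
    using mult_char_mult[OF \<chi>, of "- 1" "- 1"] by (simp add: mult_char_one[OF \<chi>])
  then have "inverse (\<chi> (- 1)) = \<chi> (- 1)"
    by (metis inverse_unique)
  then have "\<chi> x * inverse (\<chi> (- x)) = \<chi> (- 1)" if "x \<noteq> 0" for x :: 'a
    using mult_char_nonzero[OF \<chi> that] mult_char_uminus[OF \<chi> that] by simp
  then have "(\<Sum>x\<in>UNIV - {0}. \<chi> x * inverse (\<chi> (- x))) = \<chi> (- 1) * of_nat (CARD('a) - 1)"
    by (simp add: card_Diff_singleton)
  moreover have "gauss_sum \<zeta> (\<lambda>x. \<chi> x * inverse (\<chi> x)) = -1"
    using sum_addchar_nonzero[OF \<zeta>] mult_char_nonzero[OF \<chi>] by (simp add: gauss_sum_def)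
  ultimately show ?thesis
    using gauss_sum_mult_gauss_sum[OF \<zeta>(1) \<chi> mult_char_inverse_fun[OF \<chi>]]
      jacobi_sum_inverse_char[OF \<chi> nontrivial] two_le_card_finite_field[where 'a='a]
    by (simp add: of_nat_diff algebra_simps)
qed

lemma gauss_sum_quad_char_nonzero:
  fixes \<phi> :: "'a::{finite,field} \<Rightarrow> complex"
  assumes \<zeta>: "\<zeta> ^ CHAR('a) = 1" "\<forall>k. 0 < k \<and> k < CHAR('a) \<longrightarrow> \<zeta> ^ k \<noteq> 1"
    and \<phi>: "quad_char \<phi>"
  shows "gauss_sum \<zeta> \<phi> \<noteq> 0"
proof -
  obtain b :: 'a where b: "b \<noteq> 0" "\<phi> b \<noteq> 1"
    using \<phi> unfolding quad_char_def by blast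
  have "gauss_sum \<zeta> (\<lambda>x. inverse (\<phi> x)) = gauss_sum \<zeta> \<phi>"
    unfolding gauss_sum_def by (intro sum.cong refl) (simp add: quad_char_inverse_eq[OF \<phi>])
  then have "gauss_sum \<zeta> \<phi> * gauss_sum \<zeta> \<phi> = \<phi> (- 1) * of_nat CARD('a)"
    using gauss_sum_mult_inverse_char[OF \<zeta> quad_char_mult_char[OF \<phi>] b] by simp
  then show ?thesis
    using mult_char_nonzero[OF quad_char_mult_char[OF \<phi>], of "- 1"] by auto
qed

section \<open>Counting the points\<close>

lemma sum_atLeast1_atMost_eq_sum_lessThan:
  fixes F :: "nat \<Rightarrow> 'a::cancel_comm_monoid_add"
  assumes "F n = F 0"
  shows "(\<Sum>m=1..n. F m) = (\<Sum>m<n. F m)"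
proof -
  have "F 0 + (\<Sum>m=1..n. F m) = F 0 + (\<Sum>m<n. F m)"
    using assms by (simp add: sum.atLeast1_atMost_eq sum.lessThan_Suc_shift[symmetric] add.commute)
  then show ?thesis
    by simp
qed

lemma sum_lists_length_prod_list:
  fixes h :: "'b \<Rightarrow> 'c::comm_semiring_1"
  shows "(\<Sum>xs | length xs = d \<and> set xs \<subseteq> S. prod_list (map h xs)) = (\<Sum>x\<in>S. h x) ^ d"
proof (induction d)
  case 0
  have "{xs. length xs = 0 \<and> set xs \<subseteq> S} = {[]}"
    by auto
  then show ?case
    by simp
next
  case (Suc d)
  let ?L = "\<lambda>d. {xs. length xs = d \<and> set xs \<subseteq> S}"
  have L: "?L (Suc d) = (\<lambda>(x, xs). x # xs) ` (S \<times> ?L d)"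
    by (auto simp: length_Suc_conv)
  have inj: "inj_on (\<lambda>(x, xs). x # xs) (S \<times> ?L d)"
    by (auto intro: inj_onI)
  have "(\<Sum>xs\<in>?L (Suc d). prod_list (map h xs)) = (\<Sum>(x, xs)\<in>S \<times> ?L d. h x * prod_list (map h xs))"
    unfolding L by (subst sum.reindex[OF inj]) (simp add: case_prod_beta)
  also have "\<dots> = (\<Sum>x\<in>S. h x) * (\<Sum>xs\<in>?L d. prod_list (map h xs))"
    by (simp add: sum_product sum.cartesian_product)
  finally show ?case
    using Suc by simp
qed

definition zero_extension :: "('a::zero \<Rightarrow> complex) \<Rightarrow> 'a \<Rightarrow> complex" where
  "zero_extension \<chi> y = (if y = 0 then 0 else \<chi> y)"

lemma zero_extension_prod_list:
  assumes "mult_char \<chi>"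
  shows "zero_extension \<chi> (\<Prod>x\<leftarrow>xs. f x) = (\<Prod>x\<leftarrow>xs. zero_extension \<chi> (f x))"
  by (induction xs) (auto simp: zero_extension_def mult_char_one[OF assms] mult_char_mult[OF assms])

text \<open>The sum runs over \<open>1 \<le> m \<le> q - 1\<close> rather than \<open>0 \<le> m < q - 1\<close> so that it also vanishes at \<open>y = 0\<close>.\<close>
lemma indicator_eq_sum_char_generator:
  fixes \<omega> :: "'a::{finite,field} \<Rightarrow> complex"
  assumes \<omega>: "char_generator \<omega>" and "c \<noteq> 0"
  shows "(if y = c then 1 else 0) =
    (\<Sum>m=1..CARD('a) - 1. (zero_extension \<omega> y * inverse (\<omega> c)) ^ m) / of_nat (CARD('a) - 1)"
proof (cases "y = 0")
  case True
  then have "(\<Sum>m=1..CARD('a) - 1. (zero_extension \<omega> y * inverse (\<omega> c)) ^ m) = 0"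
    by (auto simp: zero_extension_def intro!: sum.neutral)
  then show ?thesis
    using True \<open>c \<noteq> 0\<close> by simp
next
  case False
  let ?N = "CARD('a) - 1"
  note mc = char_generator_mult_char[OF \<omega>]
  have u: "y / c \<noteq> 0"
    using False \<open>c \<noteq> 0\<close> by simp
  have "zero_extension \<omega> y * inverse (\<omega> c) = \<omega> (y / c)"
    using False \<open>c \<noteq> 0\<close>
    by (simp add: zero_extension_def divide_inverse mult_char_mult[OF mc] mult_char_inverse[OF mc])
  moreover have "(\<Sum>m=1..?N. \<omega> (y / c) ^ m) = (\<Sum>m<?N. \<omega> (y / c) ^ m)"
    using mult_char_power_CARD_minus_one[OF mc u] by (intro sum_atLeast1_atMost_eq_sum_lessThan) simp
  moreover have "?N > 0"
    using two_le_card_finite_field[where 'a='a] by simp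
  ultimately show ?thesis
    using sum_lessThan_char_generator_power[OF \<omega> u] \<open>c \<noteq> 0\<close> by simp
qed

lemma card_lists_prod_list_eq:
  fixes \<omega> :: "'a::{finite,field} \<Rightarrow> complex" and f :: "'b \<Rightarrow> 'a"
  assumes \<omega>: "char_generator \<omega>" and "c \<noteq> 0" and "finite S"
  shows "of_nat (card {xs. length xs = d \<and> set xs \<subseteq> S \<and> (\<Prod>x\<leftarrow>xs. f x) = c}) =
    (\<Sum>m=1..CARD('a) - 1. inverse (\<omega> c) ^ m * (\<Sum>x\<in>S. zero_extension \<omega> (f x) ^ m) ^ d)
      / of_nat (CARD('a) - 1)"
proof -
  let ?N = "CARD('a) - 1"
  let ?L = "{xs. length xs = d \<and> set xs \<subseteq> S}"
  note mc = char_generator_mult_char[OF \<omega>]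
  have "finite ?L"
    using finite_lists_length_eq[OF \<open>finite S\<close>, of d] by (simp add: conj_commute)
  have "{xs. length xs = d \<and> set xs \<subseteq> S \<and> (\<Prod>x\<leftarrow>xs. f x) = c} = {xs\<in>?L. (\<Prod>x\<leftarrow>xs. f x) = c}"
    by auto
  then have "of_nat (card {xs. length xs = d \<and> set xs \<subseteq> S \<and> (\<Prod>x\<leftarrow>xs. f x) = c}) =
      (\<Sum>xs\<in>?L. if (\<Prod>x\<leftarrow>xs. f x) = c then 1 else 0 :: complex)"
    using sum.inter_filter[OF \<open>finite ?L\<close>, of "\<lambda>_. 1::complex"] by simp
  also have "\<dots> = (\<Sum>xs\<in>?L. \<Sum>m=1..?N. inverse (\<omega> c) ^ m * zero_extension \<omega> (\<Prod>x\<leftarrow>xs. f x) ^ m) / of_nat ?N"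
    unfolding indicator_eq_sum_char_generator[OF \<omega> \<open>c \<noteq> 0\<close>]
    by (simp add: sum_divide_distrib power_mult_distrib mult.commute)
  also have "\<dots> = (\<Sum>m=1..?N. inverse (\<omega> c) ^ m * (\<Sum>xs\<in>?L. \<Prod>x\<leftarrow>xs. zero_extension \<omega> (f x) ^ m)) / of_nat ?N"
    by (subst sum.swap) (simp add: sum_distrib_left zero_extension_prod_list[OF mc] prod_list_power o_def)
  finally show ?thesis
    by (simp only: sum_lists_length_prod_list)
qed

lemma four_neq_zero: "(2::'a::idom) \<noteq> 0 \<Longrightarrow> (4::'a) \<noteq> 0"
  using mult_eq_0_iff[of "2::'a" 2] by simp

text \<open>\<open>x + 2 + x\<^sup>-\<^sup>1 = y\<close> is the quadratic \<open>x\<^sup>2 + (2 - y) x + 1 = 0\<close>, whose discriminant is \<open>y (y - 4)\<close>.\<close>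
lemma card_x_plus_inverse_eq:
  fixes y :: "'a::field"
  assumes two: "(2::'a) \<noteq> 0"
  shows "card {x. x \<noteq> 0 \<and> x + 2 + inverse x = y} = card {z. z ^ 2 = y * (y - 4)}"
proof -
  have root: "x \<noteq> 0 \<and> x + 2 + inverse x = y \<longleftrightarrow> (2 * x + 2 - y) ^ 2 = y * (y - 4)" for x
  proof -
    have "x \<noteq> 0 \<and> x + 2 + inverse x = y \<longleftrightarrow> x * x + 2 * x + 1 = y * x"
      by (cases "x = 0") (auto simp: field_simps)
    moreover have "(2 * x + 2 - y) ^ 2 - y * (y - 4) = 4 * (x * x + 2 * x + 1 - y * x)"
      by (simp add: power2_eq_square algebra_simps)
    ultimately show ?thesis
      using four_neq_zero[OF two] by (metis eq_iff_diff_eq_0 mult_eq_0_iff)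
  qed
  have solve: "2 * ((z + y - 2) / 2) + 2 - y = z" for z
    using two by (simp add: field_simps)
  have "bij_betw (\<lambda>x. 2 * x + 2 - y) {x. x \<noteq> 0 \<and> x + 2 + inverse x = y} {z. z ^ 2 = y * (y - 4)}"
  proof (rule bij_betw_byWitness[where f' = "\<lambda>z. (z + y - 2) / 2"])
    show "(\<lambda>z. (z + y - 2) / 2) ` {z. z ^ 2 = y * (y - 4)} \<subseteq> {x. x \<noteq> 0 \<and> x + 2 + inverse x = y}"
      by (auto simp only: mem_Collect_eq root solve)
  qed (use two root solve in auto)
  then show ?thesis
    by (rule bij_betw_same_card)
qed

lemma card_x_plus_inverse_fibre:
  fixes \<phi> :: "'a::{finite,field} \<Rightarrow> complex"
  assumes \<phi>: "quad_char \<phi>" and two: "(2::'a) \<noteq> 0" and "y \<noteq> 0"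
  shows "of_nat (card {x. x \<noteq> 0 \<and> x + 2 + inverse x = y}) = 1 + (if y = 4 then 0 else \<phi> (y * (y - 4)))"
proof (cases "y = 4")
  case True
  have "{z::'a. z ^ 2 = 0} = {0}"
    by auto
  then show ?thesis
    using True card_x_plus_inverse_eq[OF two, of y] by simp
next
  case False
  then show ?thesis
    using card_x_plus_inverse_eq[OF two, of y] card_square_roots[OF \<phi> two, of "y * (y - 4)"] \<open>y \<noteq> 0\<close>
    by simp
qed

lemma sum_diff_0_4_reindex:
  fixes F :: "'a::field \<Rightarrow> 'b::comm_monoid_add"
  assumes four: "(4::'a) \<noteq> 0"
  shows "(\<Sum>y\<in>UNIV - {0, 4}. F y) = (\<Sum>a\<in>UNIV - {0, 1}. F (4 + 4 / (a - 1)))"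
proof -
  have round_trip: "4 + 4 / (1 + 4 / (y - 4) - 1) = y" if "y \<noteq> 4" for y :: 'a
    using that four by (simp add: field_simps)
  show ?thesis
  proof (rule sum.reindex_bij_witness[of _ "\<lambda>a. 4 + 4 / (a - 1)" "\<lambda>y. 1 + 4 / (y - 4)"])
    fix y :: 'a assume y: "y \<in> UNIV - {0, 4}"
    then show "4 + 4 / (1 + 4 / (y - 4) - 1) = y" "F (4 + 4 / (1 + 4 / (y - 4) - 1)) = F y"
      using round_trip by auto
    show "1 + 4 / (y - 4) \<in> UNIV - {0, 1}"
      using y four by (auto simp: field_simps)
  next
    fix a :: 'a assume a: "a \<in> UNIV - {0, 1}"
    then have "a - 1 \<noteq> 0"
      by auto
    then show "1 + 4 / (4 + 4 / (a - 1) - 4) = a" "4 + 4 / (a - 1) \<in> UNIV - {0, 4}"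
      using a four by (auto simp: field_simps)
  qed
qed

text \<open>For \<open>y = 4 + 4 / (a - 1)\<close> one has \<open>y = -4 a (1 - a)\<^sup>-\<^sup>1\<close> and \<open>y (y - 4) = a (4 / (a - 1))\<^sup>2\<close>.\<close>
lemma sum_quad_char_shift_eq_jacobi_sum:
  fixes \<chi> \<phi> :: "'a::{finite,field} \<Rightarrow> complex"
  assumes two: "(2::'a) \<noteq> 0" and \<chi>: "mult_char \<chi>" and \<phi>: "quad_char \<phi>"
  shows "(\<Sum>y\<in>UNIV - {0, 4}. \<chi> y * \<phi> (y * (y - 4))) =
    \<chi> (- 4) * jacobi_sum (\<lambda>x. \<phi> x * \<chi> x) (\<lambda>x. inverse (\<chi> x))"
  unfolding sum_diff_0_4_reindex[OF four_neq_zero[OF two]] jacobi_sum_def sum_distrib_left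
proof (rule sum.cong[OF refl])
  fix a :: 'a assume a: "a \<in> UNIV - {0, 1}"
  let ?y = "4 + 4 / (a - 1)"
  have "a - 1 \<noteq> 0" "1 - a \<noteq> 0"
    using a by auto
  have "?y = (- 4) * a * inverse (1 - a)"
    using \<open>a - 1 \<noteq> 0\<close> \<open>1 - a \<noteq> 0\<close> by (simp add: field_simps)
  then have "\<chi> ?y = \<chi> (- 4) * \<chi> a * inverse (\<chi> (1 - a))"
    using mult_char_mult[OF \<chi>, of "(- 4) * a" "inverse (1 - a)"] mult_char_mult[OF \<chi>, of "- 4" a]
      mult_char_inverse[OF \<chi>, of "1 - a"] a four_neq_zero[OF two] \<open>1 - a \<noteq> 0\<close>
    by simp
  moreover have "?y * (?y - 4) = a * (4 / (a - 1)) ^ 2"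
    using \<open>a - 1 \<noteq> 0\<close> by (simp add: field_simps power2_eq_square)
  then have "\<phi> (?y * (?y - 4)) = \<phi> a"
    using a four_neq_zero[OF two] \<open>a - 1 \<noteq> 0\<close> quad_char_square[OF \<phi>, of "4 / (a - 1)"]
    by (simp add: mult_char_mult[OF quad_char_mult_char[OF \<phi>]])
  ultimately show "\<chi> ?y * \<phi> (?y * (?y - 4)) = \<chi> (- 4) * (\<phi> a * \<chi> a * inverse (\<chi> (1 - a)))"
    by (simp add: mult_ac)
qed

lemma sum_x_plus_inverse_power:
  fixes \<omega> \<phi> :: "'a::{finite,field} \<Rightarrow> complex"
  assumes two: "(2::'a) \<noteq> 0" and \<omega>: "char_generator \<omega>" and \<phi>: "quad_char \<phi>" and "0 < m"
  shows "(\<Sum>x\<in>UNIV - {0}. zero_extension \<omega> (x + 2 + inverse x) ^ m) =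
    (if CARD('a) - 1 dvd m then of_nat (CARD('a) - 1) else 0) +
    \<omega> (- 4) ^ m * jacobi_sum (\<lambda>x. \<phi> x * \<omega> x ^ m) (\<lambda>x. inverse (\<omega> x ^ m))"
proof -
  let ?f = "\<lambda>x::'a. x + 2 + inverse x"
  let ?W = "zero_extension \<omega>"
  have "(\<Sum>x\<in>UNIV - {0}. ?W (?f x) ^ m) = (\<Sum>y\<in>UNIV. \<Sum>x\<in>{x \<in> UNIV - {0}. ?f x = y}. ?W (?f x) ^ m)"
    by (rule sum.group[symmetric]) auto
  also have "\<dots> = (\<Sum>y\<in>UNIV. ?W y ^ m * of_nat (card {x \<in> UNIV - {0}. ?f x = y}))"
    by (simp add: mult.commute)
  also have "\<dots> = (\<Sum>y\<in>UNIV - {0}. \<omega> y ^ m * (1 + (if y = 4 then 0 else \<phi> (y * (y - 4)))))"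
  proof (rule sum.mono_neutral_cong_right)
    show "?W y ^ m * of_nat (card {x \<in> UNIV - {0}. ?f x = y}) =
        \<omega> y ^ m * (1 + (if y = 4 then 0 else \<phi> (y * (y - 4))))" if "y \<in> UNIV - {0}" for y
      using that card_x_plus_inverse_fibre[OF \<phi> two, of y] by (simp add: zero_extension_def)
  qed (use \<open>0 < m\<close> in \<open>auto simp: zero_extension_def\<close>)
  also have "\<dots> = (\<Sum>y\<in>UNIV - {0}. \<omega> y ^ m) +
      (\<Sum>y\<in>UNIV - {0}. \<omega> y ^ m * (if y = 4 then 0 else \<phi> (y * (y - 4))))"
    by (simp add: distrib_left sum.distrib)
  also have "(\<Sum>y\<in>UNIV - {0}. \<omega> y ^ m * (if y = 4 then 0 else \<phi> (y * (y - 4)))) =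
      (\<Sum>y\<in>UNIV - {0, 4}. \<omega> y ^ m * \<phi> (y * (y - 4)))"
    by (intro sum.mono_neutral_cong_right) auto
  also have "\<dots> = \<omega> (- 4) ^ m * jacobi_sum (\<lambda>x. \<phi> x * \<omega> x ^ m) (\<lambda>x. inverse (\<omega> x ^ m))"
    using sum_quad_char_shift_eq_jacobi_sum[OF two mult_char_power_fun[OF char_generator_mult_char[OF \<omega>]] \<phi>] .
  finally show ?thesis
    by (simp add: sum_nonzero_char_generator_power[OF \<omega>])
qed

lemma gauss_sum_ratio_eq_jacobi_sum:
  fixes \<chi> \<phi> :: "'a::{finite,field} \<Rightarrow> complex"
  assumes \<zeta>: "\<zeta> ^ CHAR('a) = 1" "\<forall>k. 0 < k \<and> k < CHAR('a) \<longrightarrow> \<zeta> ^ k \<noteq> 1"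
    and \<chi>: "mult_char \<chi>" and \<phi>: "quad_char \<phi>"
  shows "gauss_sum \<zeta> (\<lambda>x. \<phi> x * \<chi> x) * gauss_sum \<zeta> (\<lambda>x. inverse (\<chi> x)) / gauss_sum \<zeta> \<phi> =
    jacobi_sum (\<lambda>x. \<phi> x * \<chi> x) (\<lambda>x. inverse (\<chi> x))"
proof -
  obtain b :: 'a where b: "b \<noteq> 0" "\<phi> b \<noteq> 1"
    using \<phi> unfolding quad_char_def by blast
  have cancel: "\<phi> x * \<chi> x * inverse (\<chi> x) = \<phi> x" if "x \<noteq> 0" for x
    using mult_char_nonzero[OF \<chi> that] by simp
  have "gauss_sum \<zeta> (\<lambda>x. \<phi> x * \<chi> x) * gauss_sum \<zeta> (\<lambda>x. inverse (\<chi> x)) =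
      jacobi_sum (\<lambda>x. \<phi> x * \<chi> x) (\<lambda>x. inverse (\<chi> x)) * gauss_sum \<zeta> (\<lambda>x. \<phi> x * \<chi> x * inverse (\<chi> x))"
    by (intro gauss_sum_mult_eq_jacobi_sum[OF \<zeta>(1) mult_char_times[OF quad_char_mult_char[OF \<phi>] \<chi>]
        mult_char_inverse_fun[OF \<chi>] b(1)]) (subst cancel[OF b(1)], rule b(2))
  also have "gauss_sum \<zeta> (\<lambda>x. \<phi> x * \<chi> x * inverse (\<chi> x)) = gauss_sum \<zeta> \<phi>"
    unfolding gauss_sum_def by (intro sum.cong refl) (simp add: cancel)
  finally show ?thesis
    using gauss_sum_quad_char_nonzero[OF \<zeta> \<phi>] by simp
qed

lemma jacobi_sum_twist_eq_minus_one:
  fixes \<omega> \<phi> :: "'a::{finite,field} \<Rightarrow> complex"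
  assumes \<omega>: "mult_char \<omega>" and \<phi>: "quad_char \<phi>" and "CARD('a) - 1 dvd m"
  shows "jacobi_sum (\<lambda>x. \<phi> x * \<omega> x ^ m) (\<lambda>x. inverse (\<omega> x ^ m)) = -1"
proof -
  obtain b :: 'a where b: "b \<noteq> 0" "\<phi> b \<noteq> 1"
    using \<phi> unfolding quad_char_def by blast
  have "\<omega> x ^ m = 1" if "x \<noteq> 0" for x
    using mult_char_power_eq_1_if_dvd[OF \<omega> that \<open>CARD('a) - 1 dvd m\<close>] .
  then show ?thesis
    using b by (intro jacobi_sum_trivial_right[OF mult_char_times[OF quad_char_mult_char[OF \<phi>]
          mult_char_power_fun[OF \<omega>]] b(1)]) simp_all
qed

lemma mult_char_hypersurface_twist:
  fixes \<omega> :: "'a::{finite,field} \<Rightarrow> complex"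
  assumes \<omega>: "mult_char \<omega>" and four: "(4::'a) \<noteq> 0" and "t \<noteq> 0"
  shows "inverse (\<omega> (4 ^ d * inverse t)) * \<omega> (- 4) ^ d = \<omega> ((-1) ^ d * t)"
proof -
  have "\<omega> (4 ^ d * inverse t) = \<omega> 4 ^ d * inverse (\<omega> t)"
    using four \<open>t \<noteq> 0\<close> by (simp add: mult_char_mult[OF \<omega>] mult_char_power[OF \<omega>] mult_char_inverse[OF \<omega>])
  moreover have "\<omega> ((-1) ^ d * t) = \<omega> (- 1) ^ d * \<omega> t"
    using \<open>t \<noteq> 0\<close> by (simp add: mult_char_mult[OF \<omega>] mult_char_power[OF \<omega>])
  ultimately show ?thesis
    using mult_char_uminus[OF \<omega> four] mult_char_nonzero[OF \<omega> four] mult_char_nonzero[OF \<omega> \<open>t \<noteq> 0\<close>]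
    by (simp add: power_mult_distrib)
qed

lemma hypersurface_char_sum_term:
  fixes \<omega> \<phi> :: "'a::{finite,field} \<Rightarrow> complex" and t :: 'a
  assumes two: "(2::'a) \<noteq> 0" and \<omega>: "char_generator \<omega>" and \<phi>: "quad_char \<phi>" and "t \<noteq> 0"
    and m: "m \<in> {1..CARD('a) - 1}"
  shows "inverse (\<omega> (4 ^ d * inverse t)) ^ m * (\<Sum>x\<in>UNIV - {0}. zero_extension \<omega> (x + 2 + inverse x) ^ m) ^ d =
    jacobi_sum (\<lambda>x. \<phi> x * \<omega> x ^ m) (\<lambda>x. inverse (\<omega> x ^ m)) ^ d * \<omega> ((-1) ^ d * t) ^ m
      + (if m = CARD('a) - 1 then (of_nat CARD('a) - 2) ^ d - (-1) ^ d else 0)"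
proof (cases "m = CARD('a) - 1")
  case True
  note mc = char_generator_mult_char[OF \<omega>]
  have "4 ^ d * inverse t \<noteq> 0"
    using four_neq_zero[OF two] \<open>t \<noteq> 0\<close> by simp
  then have "inverse (\<omega> (4 ^ d * inverse t)) ^ m = 1"
    using mult_char_power_CARD_minus_one[OF mc] True by (simp add: power_inverse)
  moreover have "\<omega> (- 4) ^ m = 1" "\<omega> ((-1) ^ d * t) ^ m = 1"
    using mult_char_power_CARD_minus_one[OF mc] four_neq_zero[OF two] \<open>t \<noteq> 0\<close> True by simp_all
  moreover have "(of_nat (CARD('a) - 1) :: complex) = of_nat CARD('a) - 1"
    using two_le_card_finite_field[where 'a='a] by (simp add: of_nat_diff)
  ultimately show ?thesis
    using True m sum_x_plus_inverse_power[OF two \<omega> \<phi>, of m] jacobi_sum_twist_eq_minus_one[OF mc \<phi>, of m]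
    by simp
next
  case False
  then have "\<not> CARD('a) - 1 dvd m"
    using m by (auto dest: dvd_imp_le)
  then show ?thesis
    using False m sum_x_plus_inverse_power[OF two \<omega> \<phi>, of m]
      mult_char_hypersurface_twist[OF char_generator_mult_char[OF \<omega>] four_neq_zero[OF two] \<open>t \<noteq> 0\<close>, of d]
    by (simp add: power_mult_distrib flip: power_mult) (simp add: power_mult mult_ac flip: power_mult_distrib)
qed

lemma card_hypersurface_eq_sum_jacobi_sums:
  fixes \<omega> \<phi> :: "'a::{finite,field} \<Rightarrow> complex" and t :: 'a
  assumes odd: "odd CARD('a)" and \<omega>: "char_generator \<omega>" and \<phi>: "quad_char \<phi>" and "t \<noteq> 0"
  defines "J m \<equiv> jacobi_sum (\<lambda>x. \<phi> x * \<omega> x ^ m) (\<lambda>x. inverse (\<omega> x ^ m))"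
  shows "of_nat (card {xs. length xs = d \<and> (\<forall>x\<in>set xs. x \<noteq> 0) \<and>
      (\<Prod>x\<leftarrow>xs. x + 2 + inverse x) = 4 ^ d * inverse t}) =
    ((of_nat CARD('a) - 2) ^ d - (-1) ^ d) / (of_nat CARD('a) - 1)
      - (\<Sum>m<CARD('a) - 1. J m ^ d * \<omega> ((-1) ^ d * t) ^ m) / (1 - of_nat CARD('a))"
proof -
  let ?N = "CARD('a) - 1"
  let ?T = "\<lambda>m. \<Sum>x\<in>UNIV - {0}. zero_extension \<omega> (x + 2 + inverse x) ^ m"
  let ?G = "\<lambda>m. J m ^ d * \<omega> ((-1) ^ d * t) ^ m"
  define c where "c = (4::'a) ^ d * inverse t"
  note mc = char_generator_mult_char[OF \<omega>]
  have two: "(2::'a) \<noteq> 0"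
    using two_neq_zero_if_odd_CARD[OF odd] .
  have "c \<noteq> 0"
    using four_neq_zero[OF two] \<open>t \<noteq> 0\<close> by (simp add: c_def)
  have N: "?N \<ge> 1" "(of_nat ?N :: complex) = of_nat CARD('a) - 1"
    using two_le_card_finite_field[where 'a='a] by (simp_all add: of_nat_diff)
  have "{xs. length xs = d \<and> (\<forall>x\<in>set xs. x \<noteq> 0) \<and> (\<Prod>x\<leftarrow>xs. x + 2 + inverse x) = 4 ^ d * inverse t} =
      {xs. length xs = d \<and> set xs \<subseteq> UNIV - {0} \<and> (\<Prod>x\<leftarrow>xs. x + 2 + inverse x) = c}"
    by (auto simp: c_def)
  then have count: "of_nat (card {xs. length xs = d \<and> (\<forall>x\<in>set xs. x \<noteq> 0) \<and>
      (\<Prod>x\<leftarrow>xs. x + 2 + inverse x) = 4 ^ d * inverse t}) =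
      (\<Sum>m=1..?N. inverse (\<omega> c) ^ m * ?T m ^ d) / of_nat ?N"
    using card_lists_prod_list_eq[OF \<omega> \<open>c \<noteq> 0\<close>, of "UNIV - {0}" d "\<lambda>x. x + 2 + inverse x"] by simp
  have "(\<Sum>m=1..?N. inverse (\<omega> c) ^ m * ?T m ^ d) =
      (\<Sum>m=1..?N. ?G m) + ((of_nat CARD('a) - 2) ^ d - (-1) ^ d)"
    using hypersurface_char_sum_term[OF two \<omega> \<phi> \<open>t \<noteq> 0\<close>] N(1) by (simp add: J_def c_def sum.distrib)
  also have "(\<Sum>m=1..?N. ?G m) = (\<Sum>m<?N. ?G m)"
    using jacobi_sum_twist_eq_minus_one[OF mc \<phi>, of 0] jacobi_sum_twist_eq_minus_one[OF mc \<phi>, of ?N]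
      mult_char_power_CARD_minus_one[OF mc, of "(-1) ^ d * t"] \<open>t \<noteq> 0\<close>
    by (intro sum_atLeast1_atMost_eq_sum_lessThan) (simp add: J_def)
  finally have sums: "(\<Sum>m=1..?N. inverse (\<omega> c) ^ m * ?T m ^ d) =
      (of_nat CARD('a) - 2) ^ d - (-1) ^ d + (\<Sum>m<?N. ?G m)"
    by (simp add: add_ac)
  have "(A + S) / (q - 1) = A / (q - 1) - S / (1 - q)" for A S q :: complex
    by (metis add_divide_distrib diff_minus_eq_add divide_minus_right minus_diff_eq)
  then show ?thesis
    unfolding count N(2) sums .
qed

lemma sign_times_H_q_eq_sum_jacobi_sums:
  fixes \<omega> \<phi> :: "'a::{finite,field} \<Rightarrow> complex"
  assumes \<zeta>: "\<zeta> ^ CHAR('a) = 1" "\<forall>k. 0 < k \<and> k < CHAR('a) \<longrightarrow> \<zeta> ^ k \<noteq> 1"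
    and \<omega>: "mult_char \<omega>" and \<phi>: "quad_char \<phi>"
  shows "(-1) ^ d * H_q \<zeta> \<omega> \<phi> d t =
    (\<Sum>m<CARD('a) - 1. jacobi_sum (\<lambda>x. \<phi> x * \<omega> x ^ m) (\<lambda>x. inverse (\<omega> x ^ m)) ^ d
      * \<omega> ((-1) ^ d * t) ^ m) / (1 - of_nat CARD('a))"
proof -
  have "(-1 :: complex) ^ d * (-1) ^ d = 1"
    by (simp flip: power_mult_distrib)
  then show ?thesis
    unfolding H_q_def power_inverse
    using gauss_sum_ratio_eq_jacobi_sum[OF \<zeta> mult_char_power_fun[OF \<omega>] \<phi>]
    by (simp add: mult.assoc[symmetric])
qed

theorem theorem4p1:
  fixes \<omega> \<phi> :: "'a::{finite,field} \<Rightarrow> complex"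
    and \<zeta> :: complex and d :: nat and t :: 'a
  assumes "odd CARD('a)"
    and "d \<ge> 2"
    and "t \<noteq> 0"
    and "char_generator \<omega>"
    and "quad_char \<phi>"
    and "\<zeta> ^ CHAR('a) = 1" and "\<forall>k. 0 < k \<and> k < CHAR('a) \<longrightarrow> \<zeta> ^ k \<noteq> 1"
  shows "of_nat (card {xs :: 'a list. length xs = d \<and> (\<forall>x\<in>set xs. x \<noteq> 0) \<and>
                  (\<Prod>x\<leftarrow>xs. x + 2 + inverse x) = 4 ^ d * inverse t})
         = ((of_nat CARD('a) - 2) ^ d - (-1) ^ d) / (of_nat CARD('a) - 1)
           - (-1) ^ d * H_q \<zeta> \<omega> \<phi> d t"
  unfolding card_hypersurface_eq_sum_jacobi_sums[OF assms(1,4,5,3)]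
    sign_times_H_q_eq_sum_jacobi_sums[OF assms(6,7) char_generator_mult_char[OF assms(4)] assms(5)] ..

end
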